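(* Let $F = \{f_1,\dots,f_N\}$ with $f_i(z) = a_i z + b_i$, $a_i,b_i\in\mathbb{Z}$ and $a_i > 0$ for all $i$. Let $z \in \mathbb{N}$, let $\alpha, \beta$ be reduced regular expressions, and let $\ell$ be a finite (possibly empty) sequence of literals. Then: (1) $I'(z, \ell \alpha^* \beta) \iff V(z, \ell) \land \big(I'(z, \ell \beta) \lor I'(P_\ell(z), \alpha)\big)$; (2) $I'(z, \ell \alpha^* ) \iff V(z, \ell) \land \big(I'(z, \ell) \lor I'(P_\ell(z), \alpha)\big)$; (3) $I'(z, \alpha^* \beta) \iff I'(z, \alpha) \lor I'(z, \beta)$; (4) $I'(z, \alpha^* ) \iff I'(z,\alpha)$.
   Context: Regular expressions are over the alphabet $\{1,\dots,N\}$ (literals), built with concatenation, union, Kleene star, $\epsilon$ and $\emptyset$; $L(E)$ is the language of $E$. For a word $s = e_1 \cdots e_K$ put $P_s = f_{e_K} \circ \dots \circ f_{e_1}$ (with $P_\epsilon$ the identity), viewed as the composition $(f_{e_1},\dots,f_{e_K})$; its orbit at $z$ is $\{z, f_{e_1}(z), (f_{e_2}\circ f_{e_1})(z),\dots,P_s(z)\}$. A regular expression is reduced if it contains no $\emptyset$ symbol and no union operation. $V(z,s)$ is the statement that every element of the orbit of $P_s$ at $z$ is nonnegative (i.e. $P_s$ is valid with respect to $z$). For $z\in\mathbb{N}$ and reduced $E$, $I'(z,E)$ is the statement: there exists $s \in L(E)$ with $V(z,s)$ and $P_s(z) > z$. *)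

theory Defs
  imports Main
begin

text \<open>Regular expressions over literals (natural numbers; the alphabet is {1..N}).\<close>
datatype rexp = Lit nat | Eps | Empty | Conc rexp rexp | Union rexp rexp | Star rexp

fun lang :: "rexp \<Rightarrow> nat list set" where
  "lang (Lit i) = {[i]}"
| "lang Eps = {[]}"
| "lang Empty = {}"
| "lang (Conc r s) = {u @ v | u v. u \<in> lang r \<and> v \<in> lang s}"
| "lang (Union r s) = lang r \<union> lang s"
| "lang (Star r) = {concat ws | ws. \<forall>w\<in>set ws. w \<in> lang r}"

fun lits :: "rexp \<Rightarrow> nat set" where
  "lits (Lit i) = {i}"
| "lits Eps = {}"
| "lits Empty = {}"
| "lits (Conc r s) = lits r \<union> lits s"
| "lits (Union r s) = lits r \<union> lits s"
| "lits (Star r) = lits r"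

fun reduced :: "rexp \<Rightarrow> bool" where
  "reduced (Lit i) = True"
| "reduced Eps = True"
| "reduced Empty = False"
| "reduced (Conc r s) = (reduced r \<and> reduced s)"
| "reduced (Union r s) = False"
| "reduced (Star r) = reduced r"

fun word_rexp :: "nat list \<Rightarrow> rexp" where
  "word_rexp [] = Eps"
| "word_rexp [x] = Lit x"
| "word_rexp (x # xs) = Conc (Lit x) (word_rexp xs)"

definition fmap :: "(nat \<Rightarrow> int) \<Rightarrow> (nat \<Rightarrow> int) \<Rightarrow> nat \<Rightarrow> int \<Rightarrow> int" where
  "fmap a b i z = a i * z + b i"

text \<open>P_s = f_{e_K} o ... o f_{e_1} for s = e_1 ... e_K.\<close>
definition Pw :: "(nat \<Rightarrow> int) \<Rightarrow> (nat \<Rightarrow> int) \<Rightarrow> nat list \<Rightarrow> int \<Rightarrow> int" where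
  "Pw a b s z = fold (fmap a b) s z"

definition orbit :: "(nat \<Rightarrow> int) \<Rightarrow> (nat \<Rightarrow> int) \<Rightarrow> nat list \<Rightarrow> int \<Rightarrow> int set" where
  "orbit a b s z = {Pw a b (take k s) z | k. k \<le> length s}"

definition valid :: "(nat \<Rightarrow> int) \<Rightarrow> (nat \<Rightarrow> int) \<Rightarrow> int \<Rightarrow> nat list \<Rightarrow> bool" where
  "valid a b z s = (\<forall>x \<in> orbit a b s z. 0 \<le> x)"

definition Iprime :: "(nat \<Rightarrow> int) \<Rightarrow> (nat \<Rightarrow> int) \<Rightarrow> int \<Rightarrow> rexp \<Rightarrow> bool" where
  "Iprime a b z E = (\<exists>s \<in> lang E. valid a b z s \<and> Pw a b s z > z)"

end

theory Submission
  imports Defs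
begin

(*
  All coefficients a_i are positive, so every P_s is strictly increasing and the set of
  starting values from which s is valid is upward closed. If some word w of \<alpha> is valid
  and raises the value at y = P_\<ell>(z), then w is also valid and raising at every larger
  value, so iterating it pushes the value above any bound; from a large enough value any
  word of \<beta> (a reduced expression has a nonempty language) is valid and ends above z.
  If no word of \<alpha> raises the value at y, then by monotonicity no concatenation of
  \<alpha>-words started at most at y can end above y, so the suffix from \<beta> starts at
  most at y and \<ell>\<beta> already does at least as well.
*)

lemma Pw_Nil [simp]: "Pw a b [] z = z"
  by (simp add: Pw_def)

lemma Pw_Cons [simp]: "Pw a b (c # s) z = Pw a b s (fmap a b c z)"
  by (simp add: Pw_def)

lemma Pw_append [simp]: "Pw a b (u @ v) z = Pw a b v (Pw a b u z)"
  by (simp add: Pw_def)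

lemma orbit_eq_image: "orbit a b s z = (\<lambda>k. Pw a b (take k s) z) ` {..length s}"
  by (auto simp: orbit_def)

lemma orbit_Cons: "orbit a b (c # s) z = insert z (orbit a b s (fmap a b c z))"
  by (simp add: orbit_eq_image atMost_Suc_eq_insert_0 image_image)

lemma valid_Nil [simp]: "valid a b z [] \<longleftrightarrow> 0 \<le> z"
  by (simp add: valid_def orbit_def)

lemma valid_Cons [simp]: "valid a b z (c # s) \<longleftrightarrow> 0 \<le> z \<and> valid a b (fmap a b c z) s"
  by (simp add: valid_def orbit_Cons)

lemma valid_nonneg: "valid a b z s \<Longrightarrow> 0 \<le> z"
  by (cases s) auto

lemma valid_append: "valid a b z (u @ v) \<longleftrightarrow> valid a b z u \<and> valid a b (Pw a b u z) v"
  by (induction u arbitrary: z) (auto dest: valid_nonneg)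

definition pos_coeffs :: "(nat \<Rightarrow> int) \<Rightarrow> nat list \<Rightarrow> bool" where
  "pos_coeffs a s \<longleftrightarrow> (\<forall>i \<in> set s. 0 < a i)"

lemma pos_coeffs_Cons [simp]: "pos_coeffs a (c # s) \<longleftrightarrow> 0 < a c \<and> pos_coeffs a s"
  by (simp add: pos_coeffs_def)

lemma fmap_mono: "0 < a c \<Longrightarrow> x \<le> y \<Longrightarrow> fmap a b c x \<le> fmap a b c y"
  by (simp add: fmap_def)

lemma fmap_strict_mono: "0 < a c \<Longrightarrow> x < y \<Longrightarrow> fmap a b c x < fmap a b c y"
  by (simp add: fmap_def)

lemma Pw_mono: "pos_coeffs a s \<Longrightarrow> x \<le> y \<Longrightarrow> Pw a b s x \<le> Pw a b s y"
  by (induction s arbitrary: x y) (auto dest: fmap_mono)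

lemma Pw_strict_mono: "pos_coeffs a s \<Longrightarrow> x < y \<Longrightarrow> Pw a b s x < Pw a b s y"
  by (induction s arbitrary: x y) (auto dest: fmap_strict_mono)

lemma valid_mono: "pos_coeffs a s \<Longrightarrow> x \<le> y \<Longrightarrow> valid a b x s \<Longrightarrow> valid a b y s"
  by (induction s arbitrary: x y) (auto dest: fmap_mono)

lemma ex_threshold_valid_gt:
  assumes "pos_coeffs a s"
  shows "\<exists>M. \<forall>x \<ge> M. valid a b x s \<and> t < Pw a b s x"
  using assms
proof (induction s)
  case Nil
  show ?case by (rule exI[of _ "max 0 (t + 1)"]) auto
next
  case (Cons c s)
  then obtain M where M: "\<forall>x \<ge> M. valid a b x s \<and> t < Pw a b s x"
    by auto
  have "M \<le> fmap a b c x" if "\<bar>M\<bar> + \<bar>b c\<bar> \<le> x" for x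
  proof -
    have "0 \<le> x"
      using that by (meson abs_ge_zero add_nonneg_nonneg order_trans)
    then have "x \<le> a c * x"
      using Cons.prems by (simp add: mult_le_cancel_right1)
    then show ?thesis
      using that by (simp add: fmap_def)
  qed
  then show ?case
    using M by (intro exI[of _ "\<bar>M\<bar> + \<bar>b c\<bar>"]) auto
qed

definition raises :: "(nat \<Rightarrow> int) \<Rightarrow> (nat \<Rightarrow> int) \<Rightarrow> int \<Rightarrow> nat list \<Rightarrow> bool" where
  "raises a b z s \<longleftrightarrow> valid a b z s \<and> z < Pw a b s z"

lemma Iprime_iff_raises: "Iprime a b z E \<longleftrightarrow> (\<exists>s \<in> lang E. raises a b z s)"
  by (simp add: Iprime_def raises_def)

lemma raises_replicate:
  assumes "pos_coeffs a w" and "raises a b y w"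
  shows "valid a b y (concat (replicate n w)) \<and> y + int n \<le> Pw a b (concat (replicate n w)) y"
  using assms(2)
proof (induction n arbitrary: y)
  case 0
  then show ?case by (auto simp: raises_def dest: valid_nonneg)
next
  case (Suc n)
  have "raises a b (Pw a b w y) w"
    using Suc.prems valid_mono[OF assms(1)] Pw_strict_mono[OF assms(1)]
    unfolding raises_def by (meson less_imp_le)
  with Suc.IH Suc.prems show ?case
    by (force simp: raises_def valid_append)
qed

lemma Pw_concat_le_if_no_raise:
  assumes "set ws \<subseteq> A" and "\<forall>w \<in> A. pos_coeffs a w" and "\<forall>w \<in> A. \<not> raises a b y w"
    and "x \<le> y" and "valid a b x (concat ws)"
  shows "Pw a b (concat ws) x \<le> y"
  using assms(1,4,5)
proof (induction ws arbitrary: x)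
  case (Cons w ws)
  have "pos_coeffs a w" "w \<in> A"
    using Cons.prems(1) assms(2) by auto
  moreover have "valid a b y w"
    using Cons.prems by (auto simp: valid_append intro: valid_mono[OF \<open>pos_coeffs a w\<close>])
  ultimately have "Pw a b w x \<le> y"
    using assms(3) Pw_mono[OF _ \<open>x \<le> y\<close>, of a w b] unfolding raises_def by force
  with Cons show ?case
    by (simp add: valid_append)
qed simp

lemma raises_through_star_imp:
  assumes A: "\<forall>w \<in> A. pos_coeffs a w" and B: "\<forall>v \<in> B. pos_coeffs a v"
    and ws: "set ws \<subseteq> A" and v: "v \<in> B" and r: "raises a b z (l @ concat ws @ v)"
  shows "valid a b z l \<and> ((\<exists>v \<in> B. raises a b z (l @ v)) \<or> (\<exists>w \<in> A. raises a b (Pw a b l z) w))"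
proof -
  define y where "y = Pw a b l z"
  have vl: "valid a b z l" and vws: "valid a b y (concat ws)"
    and vv: "valid a b (Pw a b (concat ws) y) v"
    using r by (auto simp: raises_def valid_append y_def)
  moreover have "raises a b z (l @ v)" if "\<forall>w \<in> A. \<not> raises a b y w"
  proof -
    have le: "Pw a b (concat ws) y \<le> y"
      using Pw_concat_le_if_no_raise[OF ws A that order_refl vws] .
    have "valid a b y v"
      using valid_mono[OF _ le vv] B v by blast
    moreover have "Pw a b v (Pw a b (concat ws) y) \<le> Pw a b v y"
      using Pw_mono B v le by blast
    then have "z < Pw a b v y"
      using r by (simp add: raises_def y_def)
    ultimately show ?thesis
      using vl by (simp add: raises_def valid_append y_def)
  qed
  ultimately show ?thesis
    using v y_def by blast
qed

lemma raises_through_star_rev: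
  assumes A: "\<forall>w \<in> A. pos_coeffs a w" and B: "\<forall>v \<in> B. pos_coeffs a v" and "v0 \<in> B"
    and w: "w \<in> A" and vl: "valid a b z l" and r: "raises a b (Pw a b l z) w"
  shows "\<exists>ws v. set ws \<subseteq> A \<and> v \<in> B \<and> raises a b z (l @ concat ws @ v)"
proof -
  define y where "y = Pw a b l z"
  obtain M where M: "\<forall>x \<ge> M. valid a b x v0 \<and> z < Pw a b v0 x"
    using ex_threshold_valid_gt B \<open>v0 \<in> B\<close> by blast
  define ws where "ws = replicate (nat (M - y)) w"
  have "valid a b y (concat ws)" and "y + int (nat (M - y)) \<le> Pw a b (concat ws) y"
    using raises_replicate A w r unfolding ws_def y_def by blast+
  then have "M \<le> Pw a b (concat ws) y"
    by linarith
  then have "raises a b z (l @ concat ws @ v0)"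
    using \<open>valid a b y (concat ws)\<close> M vl by (simp add: raises_def valid_append y_def)
  moreover have "set ws \<subseteq> A"
    using w by (simp add: ws_def set_replicate_conv_if)
  ultimately show ?thesis
    using \<open>v0 \<in> B\<close> by blast
qed

lemma raises_through_star:
  assumes A: "\<forall>w \<in> A. pos_coeffs a w" and B: "\<forall>v \<in> B. pos_coeffs a v" and "B \<noteq> {}"
  shows "(\<exists>ws v. set ws \<subseteq> A \<and> v \<in> B \<and> raises a b z (l @ concat ws @ v)) \<longleftrightarrow>
         valid a b z l \<and> ((\<exists>v \<in> B. raises a b z (l @ v)) \<or> (\<exists>w \<in> A. raises a b (Pw a b l z) w))"
    (is "?lhs \<longleftrightarrow> valid a b z l \<and> (?direct \<or> ?pumped)")
proof
  assume ?lhs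
  then show "valid a b z l \<and> (?direct \<or> ?pumped)"
    using raises_through_star_imp[OF A B] by blast
next
  assume rhs: "valid a b z l \<and> (?direct \<or> ?pumped)"
  show ?lhs
  proof (cases ?direct)
    case True
    then obtain v where "v \<in> B" "raises a b z (l @ v)" by blast
    then show ?thesis by (intro exI[of _ "[]"] exI[of _ v]) auto
  next
    case False
    then obtain w where "w \<in> A" "raises a b (Pw a b l z) w"
      using rhs by blast
    moreover obtain v0 where "v0 \<in> B"
      using \<open>B \<noteq> {}\<close> by blast
    ultimately show ?thesis
      using raises_through_star_rev[OF A B] rhs by blast
  qed
qed

lemma lang_word_rexp [simp]: "lang (word_rexp l) = {l}"
  by (induction l rule: word_rexp.induct) auto

lemma lang_subset_lits: "s \<in> lang E \<Longrightarrow> set s \<subseteq> lits E"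
  by (induction E arbitrary: s) fastforce+

lemma lang_Star: "lang (Star E) = {concat ws | ws. set ws \<subseteq> lang E}"
  by auto

lemma lang_nonempty_if_reduced: "reduced E \<Longrightarrow> lang E \<noteq> {}"
proof (induction E)
  case (Conc E F)
  then obtain u v where "u \<in> lang E" "v \<in> lang F" by auto
  then show ?case by auto
next
  case (Star E)
  have "concat [] \<in> lang (Star E)"
    unfolding lang_Star by (intro CollectI exI[of _ "[]"]) simp
  then show ?case by blast
qed auto

lemma lang_word_Star_Conc:
  "lang (Conc (word_rexp l) (Conc (Star \<alpha>) \<beta>)) = {l @ concat ws @ v | ws v. set ws \<subseteq> lang \<alpha> \<and> v \<in> lang \<beta>}"
  by (auto simp: lang_Star simp del: lang.simps(6))

lemma lang_word_Star:
  "lang (Conc (word_rexp l) (Star \<alpha>)) = {l @ concat ws | ws. set ws \<subseteq> lang \<alpha>}"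
  by (auto simp: lang_Star simp del: lang.simps(6))

lemma pos_coeffs_lang: "\<forall>i \<in> lits E. 0 < a i \<Longrightarrow> s \<in> lang E \<Longrightarrow> pos_coeffs a s"
  using lang_subset_lits by (fastforce simp: pos_coeffs_def)

lemma Iprime_Conc_Eps [simp]: "Iprime a b z (Conc Eps E) \<longleftrightarrow> Iprime a b z E"
  by (simp add: Iprime_def)

lemma not_Iprime_Eps [simp]: "\<not> Iprime a b z Eps"
  by (simp add: Iprime_def)

lemma Iprime_word_Star_Conc:
  assumes "\<forall>w \<in> lang \<alpha>. pos_coeffs a w" and "\<forall>v \<in> lang \<beta>. pos_coeffs a v" and "lang \<beta> \<noteq> {}"
  shows "Iprime a b z (Conc (word_rexp l) (Conc (Star \<alpha>) \<beta>)) \<longleftrightarrow>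
         valid a b z l \<and> (Iprime a b z (Conc (word_rexp l) \<beta>) \<or> Iprime a b (Pw a b l z) \<alpha>)"
proof -
  have "Iprime a b z (Conc (word_rexp l) (Conc (Star \<alpha>) \<beta>)) \<longleftrightarrow>
        (\<exists>ws v. set ws \<subseteq> lang \<alpha> \<and> v \<in> lang \<beta> \<and> raises a b z (l @ concat ws @ v))"
    unfolding Iprime_iff_raises lang_word_Star_Conc by blast
  also have "\<dots> \<longleftrightarrow> valid a b z l \<and> ((\<exists>v \<in> lang \<beta>. raises a b z (l @ v))
                      \<or> (\<exists>w \<in> lang \<alpha>. raises a b (Pw a b l z) w))"
    using raises_through_star[OF assms] .
  finally show ?thesis
    by (auto simp: Iprime_iff_raises)
qed

lemma Iprime_word_Star:
  assumes "\<forall>w \<in> lang \<alpha>. pos_coeffs a w"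
  shows "Iprime a b z (Conc (word_rexp l) (Star \<alpha>)) \<longleftrightarrow>
         valid a b z l \<and> (Iprime a b z (word_rexp l) \<or> Iprime a b (Pw a b l z) \<alpha>)"
proof -
  have "Iprime a b z (Conc (word_rexp l) (Star \<alpha>)) \<longleftrightarrow>
        (\<exists>ws v. set ws \<subseteq> lang \<alpha> \<and> v \<in> {[]} \<and> raises a b z (l @ concat ws @ v))"
    unfolding Iprime_iff_raises lang_word_Star by auto
  also have "\<dots> \<longleftrightarrow> valid a b z l \<and> ((\<exists>v \<in> {[]}. raises a b z (l @ v))
                      \<or> (\<exists>w \<in> lang \<alpha>. raises a b (Pw a b l z) w))"
    using raises_through_star[OF assms, of "{[]}"] by (simp add: pos_coeffs_def)
  finally show ?thesis
    by (simp add: Iprime_iff_raises)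
qed

theorem mainTheorem13:
  fixes N :: nat and a b :: "nat \<Rightarrow> int" and z :: int
    and \<alpha> \<beta> :: rexp and l :: "nat list"
  assumes apos: "\<forall>i \<in> {1..N}. a i > 0"
    and z: "0 \<le> z"
    and red\<alpha>: "reduced \<alpha>" and red\<beta>: "reduced \<beta>"
    and lits\<alpha>: "lits \<alpha> \<subseteq> {1..N}" and lits\<beta>: "lits \<beta> \<subseteq> {1..N}"
    and litsl: "set l \<subseteq> {1..N}"
  shows "(Iprime a b z (Conc (word_rexp l) (Conc (Star \<alpha>) \<beta>)) \<longleftrightarrow>
           valid a b z l \<and> (Iprime a b z (Conc (word_rexp l) \<beta>) \<or> Iprime a b (Pw a b l z) \<alpha>))
       \<and> (Iprime a b z (Conc (word_rexp l) (Star \<alpha>)) \<longleftrightarrow>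
           valid a b z l \<and> (Iprime a b z (word_rexp l) \<or> Iprime a b (Pw a b l z) \<alpha>))
       \<and> (Iprime a b z (Conc (Star \<alpha>) \<beta>) \<longleftrightarrow> Iprime a b z \<alpha> \<or> Iprime a b z \<beta>)
       \<and> (Iprime a b z (Star \<alpha>) \<longleftrightarrow> Iprime a b z \<alpha>)"
proof -
  have A: "\<forall>w \<in> lang \<alpha>. pos_coeffs a w" and B: "\<forall>v \<in> lang \<beta>. pos_coeffs a v"
    using pos_coeffs_lang apos lits\<alpha> lits\<beta> by (metis subsetD)+
  note prefixed = Iprime_word_Star_Conc[OF A B lang_nonempty_if_reduced[OF red\<beta>]]
    Iprime_word_Star[OF A]
  have "Iprime a b z (Conc (Star \<alpha>) \<beta>) \<longleftrightarrow> Iprime a b z \<alpha> \<or> Iprime a b z \<beta>"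
    and "Iprime a b z (Star \<alpha>) \<longleftrightarrow> Iprime a b z \<alpha>"
    using prefixed[where l = "[]"] z by (simp_all add: disj_commute)
  with prefixed show ?thesis
    by blast
qed

end
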